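(* Consider the problem described in the context and let $\mathbf{x}_0=(x_0,y_0)\notin\Omega_{\rm capture}$. Let $T_{\min}(\mathbf{x}_0)=\arg\min_{T>0} d_f^*(T,\mathbf{x}_0)$. Then $$T_{\min}(\mathbf{x}_0)=\begin{cases}x_0-\frac{\mu}{\sqrt{1-\mu^2}}y_0, & \text{if } x_0-\frac{\mu}{\sqrt{1-\mu^2}}y_0>0,\\ 0, & \text{otherwise},\end{cases}$$ and consequently $$d_f^*(T_{\min},\mathbf{x}_0)=\begin{cases}\mu x_0+\sqrt{1-\mu^2}\,y_0, & \text{if } T_{\min}(\mathbf{x}_0)>0,\\ \|\mathbf{x}_0\|, & \text{otherwise}.\end{cases}$$
   Context: Pursuer-fixed frame: the Evader's relative position $\mathbf{x}(t)=(x(t),y(t))\in\mathbb{R}^2$ evolves as $\dot x=\mu\cos\psi(t)-1$, $\dot y=\mu\sin\psi(t)$, $\mathbf{x}(0)=\mathbf{x}_0$, $\|\mathbf{x}_0\|>1$, $\mu\in(0,1)$, $\psi(t)$ the Evader's heading. The constraint is $\|\mathbf{x}(t)\|\ge1$ on $[0,T]$. For a final time $T$, $d_f^*(T,\mathbf{x}_0)$ denotes the maximal final distance $\|\mathbf{x}(T)\|$ achievable by the Evader subject to the constraint (its best response). For $T>0$, $\Omega(T)$ is the set of $\mathbf{x}_0$ with $(x_0-T)^2+y_0^2<(1-\mu T)^2$, $\mu x_0+\sqrt{1-\mu^2}y_0<1$ and $x_0>\mu$, and $\Omega_{\rm capture}=\bigcup_{T\ge0}\Omega(T)$ (the set of initial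 positions from which, for some final time, capture, i.e. entering $\|\mathbf{x}\|<1$, is unavoidable). The paper assumes $y\ge0$ throughout. *)

theory Defs
  imports "HOL-Analysis.Analysis"
begin

text \<open>Evader relative position in the pursuer-fixed frame under heading control psi:
  x(t) = x0 + int_0^t (mu cos psi - 1), y(t) = y0 + int_0^t mu sin psi.\<close>
definition traj_x :: "real \<Rightarrow> (real \<Rightarrow> real) \<Rightarrow> real \<Rightarrow> real \<Rightarrow> real" where
  "traj_x mu psi x0 t = x0 + integral {0..t} (\<lambda>s. mu * cos (psi s) - 1)"

definition traj_y :: "real \<Rightarrow> (real \<Rightarrow> real) \<Rightarrow> real \<Rightarrow> real \<Rightarrow> real" where
  "traj_y mu psi y0 t = y0 + integral {0..t} (\<lambda>s. mu * sin (psi s))"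

definition traj_dist :: "real \<Rightarrow> (real \<Rightarrow> real) \<Rightarrow> real \<Rightarrow> real \<Rightarrow> real \<Rightarrow> real" where
  "traj_dist mu psi x0 y0 t = sqrt ((traj_x mu psi x0 t)\<^sup>2 + (traj_y mu psi y0 t)\<^sup>2)"

definition admissible :: "real \<Rightarrow> real \<Rightarrow> real \<Rightarrow> real \<Rightarrow> (real \<Rightarrow> real) \<Rightarrow> bool" where
  "admissible mu T x0 y0 psi \<longleftrightarrow>
     psi \<in> borel_measurable lborel \<and> (\<forall>t\<in>{0..T}. traj_dist mu psi x0 y0 t \<ge> 1)"

definition dfstar :: "real \<Rightarrow> real \<Rightarrow> real \<Rightarrow> real \<Rightarrow> real" where
  "dfstar mu T x0 y0 = Sup {traj_dist mu psi x0 y0 T | psi. admissible mu T x0 y0 psi}"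

definition Omega :: "real \<Rightarrow> real \<Rightarrow> (real \<times> real) set" where
  "Omega mu T = {(x0, y0). (x0 - T)\<^sup>2 + y0\<^sup>2 < (1 - mu * T)\<^sup>2
                      \<and> mu * x0 + sqrt (1 - mu\<^sup>2) * y0 < 1 \<and> x0 > mu}"

definition Omega_capture :: "real \<Rightarrow> (real \<times> real) set" where
  "Omega_capture mu = (\<Union>T\<in>{0..}. Omega mu T)"

end

theory Submission
  imports Defs
begin

(* Whatever the heading, the Evader's position at time T differs from the free drift (x0 - T, y0)
   by a vector of length at most mu T, so d_f^*(T) <= |(x0 - T, y0)| + mu T.  Conversely, under a
   constant heading u = (cos th, sin th) the projection of the position onto u changes at the rate
   mu - cos th; when cos th <= mu the distance therefore never drops below the initial projection,
   and the heading is admissible as soon as that projection is at least 1.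
   If x0 - mu y0 / sqrt (1 - mu^2) > 0, take u = (mu, sqrt (1 - mu^2)): the projection is
   mu x0 + sqrt (1 - mu^2) y0, which is at least 1 because x0 lies outside Omega_capture, and the
   upper bound attains it exactly at T = Tmin.  Otherwise flee radially, u = x0 / |x0|: then
   cos th <= mu, the projection is |x0|, and the upper bound attains it at T = 0. *)

lemma heading_integrable:
  fixes psi :: "real \<Rightarrow> real" and a b :: real
  assumes "psi \<in> borel_measurable lborel"
  shows "(\<lambda>s. cis (psi s)) integrable_on {a..b}"
proof (rule measurable_bounded_by_integrable_imp_integrable)
  have "psi \<in> borel_measurable (lebesgue_on {a..b})"
    using assms by (simp add: measurable_completion measurable_restrict_space1)
  moreover have "cis \<in> borel_measurable borel"
    by (intro borel_measurable_continuous_onI continuous_intros)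
  ultimately show "(\<lambda>s. cis (psi s)) \<in> borel_measurable (lebesgue_on {a..b})"
    by (rule measurable_compose)
qed auto

lemma traj_endpoint:
  assumes psi: "psi \<in> borel_measurable lborel" and T: "0 \<le> T"
  obtains I :: complex where "cmod I \<le> T"
    "traj_x mu psi x0 T = x0 - T + mu * Re I" "traj_y mu psi y0 T = y0 + mu * Im I"
proof
  define I where "I = integral {0..T} (\<lambda>s. cis (psi s))"
  have hI: "((\<lambda>s. cis (psi s)) has_integral I) {0..T}"
    unfolding I_def using heading_integrable[OF psi] by (rule integrable_integral)
  have "cmod I \<le> integral {0..T} (\<lambda>_. 1)"
    unfolding I_def by (rule integral_norm_bound_integral) (auto intro: heading_integrable[OF psi])
  then show "cmod I \<le> T"
    using T by simp
  have "((\<lambda>s. mu * cos (psi s) - 1) has_integral mu * Re I - T) {0..T}"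
    using has_integral_diff[OF has_integral_mult_right[OF has_integral_Re[OF hI]]
        has_integral_const_real[of 1 0 T]] T by simp
  then show "traj_x mu psi x0 T = x0 - T + mu * Re I"
    by (simp add: traj_x_def integral_unique)
  have "((\<lambda>s. mu * sin (psi s)) has_integral mu * Im I) {0..T}"
    using has_integral_mult_right[OF has_integral_Im[OF hI]] by simp
  then show "traj_y mu psi y0 T = y0 + mu * Im I"
    by (simp only: traj_y_def integral_unique)
qed

lemma traj_dist_le_drift_plus_reach:
  assumes psi: "psi \<in> borel_measurable lborel" and T: "0 \<le> T" and mu: "0 \<le> mu"
  shows "traj_dist mu psi x0 y0 T \<le> sqrt ((x0 - T)\<^sup>2 + y0\<^sup>2) + mu * T"
proof -
  obtain I where I: "cmod I \<le> T"
    "traj_x mu psi x0 T = x0 - T + mu * Re I" "traj_y mu psi y0 T = y0 + mu * Im I"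
    using traj_endpoint[OF psi T] by blast
  have "traj_dist mu psi x0 y0 T = cmod (Complex (x0 - T) y0 + of_real mu * I)"
    by (simp add: traj_dist_def I cmod_def)
  also have "\<dots> \<le> cmod (Complex (x0 - T) y0) + mu * cmod I"
    using norm_triangle_ineq[of "Complex (x0 - T) y0" "of_real mu * I"] mu
    by (simp add: norm_mult)
  also have "\<dots> \<le> sqrt ((x0 - T)\<^sup>2 + y0\<^sup>2) + mu * T"
    using I(1) mu by (simp add: complex_norm mult_left_mono)
  finally show ?thesis .
qed

lemma cos_sin_combination_le:
  fixes X Y th :: real
  shows "X * cos th + Y * sin th \<le> sqrt (X\<^sup>2 + Y\<^sup>2)"
proof -
  have "X * cos th + Y * sin th = Re (Complex X Y * cnj (cis th))"
    by simp
  also have "\<dots> \<le> cmod (Complex X Y * cnj (cis th))"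
    by (rule complex_Re_le_cmod)
  also have "\<dots> = sqrt (X\<^sup>2 + Y\<^sup>2)"
    by (simp add: norm_mult complex_norm)
  finally show ?thesis .
qed

lemma traj_dist_const_heading_ge:
  assumes "0 \<le> t"
  shows "x0 * cos th + y0 * sin th + t * (mu - cos th) \<le> traj_dist mu (\<lambda>_. th) x0 y0 t"
proof -
  define X where "X = x0 + t * (mu * cos th - 1)"
  define Y where "Y = y0 + t * (mu * sin th)"
  have "traj_dist mu (\<lambda>_. th) x0 y0 t = sqrt (X\<^sup>2 + Y\<^sup>2)"
    using assms by (simp add: traj_dist_def traj_x_def traj_y_def X_def Y_def algebra_simps)
  moreover have "X * cos th + Y * sin th
      = x0 * cos th + y0 * sin th + t * (mu - cos th)"
    using sin_cos_squared_add3[of th] unfolding X_def Y_def by algebra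
  ultimately show ?thesis
    using cos_sin_combination_le[of X th Y] by simp
qed

lemma bdd_above_admissible_dists:
  assumes "0 \<le> T" and "0 \<le> mu"
  shows "bdd_above {traj_dist mu psi x0 y0 T | psi. admissible mu T x0 y0 psi}"
proof (rule bdd_aboveI)
  fix d
  assume "d \<in> {traj_dist mu psi x0 y0 T | psi. admissible mu T x0 y0 psi}"
  then obtain psi where "d = traj_dist mu psi x0 y0 T" "psi \<in> borel_measurable lborel"
    by (auto simp: admissible_def)
  then show "d \<le> sqrt ((x0 - T)\<^sup>2 + y0\<^sup>2) + mu * T"
    using traj_dist_le_drift_plus_reach assms by blast
qed

lemma traj_dist_le_dfstar:
  assumes "admissible mu T x0 y0 psi" and "0 \<le> T" and "0 \<le> mu"
  shows "traj_dist mu psi x0 y0 T \<le> dfstar mu T x0 y0"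
  unfolding dfstar_def
proof (rule cSup_upper)
  show "traj_dist mu psi x0 y0 T \<in> {traj_dist mu psi x0 y0 T | psi. admissible mu T x0 y0 psi}"
    using assms(1) by blast
  show "bdd_above {traj_dist mu psi x0 y0 T | psi. admissible mu T x0 y0 psi}"
    using assms(2,3) by (rule bdd_above_admissible_dists)
qed

lemma dfstar_le_drift_plus_reach:
  assumes "admissible mu T x0 y0 psi" and "0 \<le> T" and "0 \<le> mu"
  shows "dfstar mu T x0 y0 \<le> sqrt ((x0 - T)\<^sup>2 + y0\<^sup>2) + mu * T"
  unfolding dfstar_def
proof (rule cSup_least)
  show "{traj_dist mu psi x0 y0 T | psi. admissible mu T x0 y0 psi} \<noteq> {}"
    using assms(1) by blast
next
  fix d
  assume "d \<in> {traj_dist mu psi x0 y0 T | psi. admissible mu T x0 y0 psi}"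
  then obtain psi' where "d = traj_dist mu psi' x0 y0 T" "psi' \<in> borel_measurable lborel"
    by (auto simp: admissible_def)
  then show "d \<le> sqrt ((x0 - T)\<^sup>2 + y0\<^sup>2) + mu * T"
    using traj_dist_le_drift_plus_reach assms(2,3) by blast
qed

lemma dfstar_eq_if_barrier:
  assumes mu: "0 \<le> mu" and T0: "0 \<le> T0"
    and psi: "psi \<in> borel_measurable lborel"
    and barrier: "\<And>t. 0 \<le> t \<Longrightarrow> D \<le> traj_dist mu psi x0 y0 t" and D1: "1 \<le> D"
    and reach: "sqrt ((x0 - T0)\<^sup>2 + y0\<^sup>2) + mu * T0 \<le> D"
  shows "dfstar mu T0 x0 y0 = D \<and> (\<forall>T\<ge>0. D \<le> dfstar mu T x0 y0)"
proof -
  have adm: "admissible mu T x0 y0 psi" for T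
    unfolding admissible_def using psi barrier D1 by force
  have lower: "D \<le> dfstar mu T x0 y0" if "0 \<le> T" for T
    using barrier[OF that] traj_dist_le_dfstar[OF adm that mu] by linarith
  have "dfstar mu T0 x0 y0 \<le> D"
    using dfstar_le_drift_plus_reach[OF adm T0 mu] reach by linarith
  then have "dfstar mu T0 x0 y0 = D"
    using lower[OF T0] by (rule antisym)
  then show ?thesis
    using lower by blast
qed

lemma tangent_time_geometry:
  fixes mu x y :: real
  assumes "0 < mu" "mu < 1"
  defines "s \<equiv> sqrt (1 - mu\<^sup>2)"
  defines "T0 \<equiv> x - mu / s * y"
  shows "(x - T0)\<^sup>2 + y\<^sup>2 = (y / s)\<^sup>2" and "y / s + mu * T0 = mu * x + s * y"
proof -
  have "mu\<^sup>2 < 1"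
    using assms by (simp add: power_less_one_iff abs_less_iff)
  then have s: "0 < s" "s\<^sup>2 = 1 - mu\<^sup>2"
    by (simp_all add: s_def)
  have "(x - T0)\<^sup>2 + y\<^sup>2 = (y / s)\<^sup>2 * (mu\<^sup>2 + s\<^sup>2)"
    using s(1) by (simp add: T0_def field_simps power2_eq_square)
  then show "(x - T0)\<^sup>2 + y\<^sup>2 = (y / s)\<^sup>2"
    using s by simp
  have "y / s + mu * T0 = mu * x + y / s * (1 - mu\<^sup>2)"
    by (simp add: T0_def algebra_simps power2_eq_square)
  then show "y / s + mu * T0 = mu * x + s * y"
    using s(1) by (simp add: s(2)[symmetric]) (simp add: power2_eq_square)
qed

lemma mu_less_x0:
  fixes mu x0 y0 :: real
  assumes mu: "0 < mu" "mu < 1" and y0: "0 \<le> y0" and outside: "1 < x0\<^sup>2 + y0\<^sup>2"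
    and right: "mu * y0 < sqrt (1 - mu\<^sup>2) * x0"
  shows "mu < x0"
proof -
  have s2: "(sqrt (1 - mu\<^sup>2))\<^sup>2 = 1 - mu\<^sup>2"
    using mu by (simp add: power_le_one)
  have "0 \<le> mu * y0"
    using mu y0 by simp
  then have "0 < sqrt (1 - mu\<^sup>2) * x0"
    using right by linarith
  moreover have "0 < sqrt (1 - mu\<^sup>2)"
    using mu by (simp add: power_less_one_iff abs_less_iff)
  ultimately have x0: "0 < x0"
    by (rule zero_less_mult_pos)
  have "(mu * y0)\<^sup>2 < (sqrt (1 - mu\<^sup>2) * x0)\<^sup>2"
    using right mu y0 by (intro power_strict_mono) auto
  then have "mu\<^sup>2 * (x0\<^sup>2 + y0\<^sup>2) < x0\<^sup>2"
    by (simp add: power_mult_distrib s2 algebra_simps)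
  moreover have "mu\<^sup>2 \<le> mu\<^sup>2 * (x0\<^sup>2 + y0\<^sup>2)"
    using outside mult_left_mono[of 1 "x0\<^sup>2 + y0\<^sup>2" "mu\<^sup>2"] by simp
  ultimately have "mu\<^sup>2 < x0\<^sup>2"
    by linarith
  then show ?thesis
    by (rule power_less_imp_less_base) (use x0 in simp)
qed

lemma x0_le_mu_norm:
  fixes mu x0 y0 :: real
  assumes mu: "0 < mu" "mu < 1"
    and left: "sqrt (1 - mu\<^sup>2) * x0 \<le> mu * y0"
  shows "x0 \<le> mu * sqrt (x0\<^sup>2 + y0\<^sup>2)"
proof (cases "x0 \<le> 0")
  case True
  moreover have "0 \<le> mu * sqrt (x0\<^sup>2 + y0\<^sup>2)"
    using mu by simp
  ultimately show ?thesis
    by linarith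
next
  case False
  have s2: "(sqrt (1 - mu\<^sup>2))\<^sup>2 = 1 - mu\<^sup>2"
    using mu by (simp add: power_le_one)
  have "(sqrt (1 - mu\<^sup>2) * x0)\<^sup>2 \<le> (mu * y0)\<^sup>2"
    using left False mu by (intro power_mono) (auto simp: power_le_one)
  then have "(1 - mu\<^sup>2) * x0\<^sup>2 \<le> mu\<^sup>2 * y0\<^sup>2"
    by (simp add: power_mult_distrib s2)
  then have "x0\<^sup>2 \<le> mu\<^sup>2 * (x0\<^sup>2 + y0\<^sup>2)"
    by (simp add: algebra_simps)
  also have "\<dots> = (mu * sqrt (x0\<^sup>2 + y0\<^sup>2))\<^sup>2"
    by (simp add: power_mult_distrib)
  finally show ?thesis
    by (rule power2_le_imp_le) (use mu in simp)
qed

lemma dfstar_min_at_tangent_time: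
  fixes mu x0 y0 :: real
  defines "T0 \<equiv> x0 - mu / sqrt (1 - mu\<^sup>2) * y0"
    and "L \<equiv> mu * x0 + sqrt (1 - mu\<^sup>2) * y0"
  assumes mu: "0 < mu" "mu < 1" and y0: "0 \<le> y0" and outside: "1 < sqrt (x0\<^sup>2 + y0\<^sup>2)"
    and notcap: "(x0, y0) \<notin> Omega_capture mu" and T0: "0 < T0"
  shows "dfstar mu T0 x0 y0 = L \<and> (\<forall>T\<ge>0. L \<le> dfstar mu T x0 y0)"
proof -
  define s where "s = sqrt (1 - mu\<^sup>2)"
  have s: "0 < s" "mu\<^sup>2 + s\<^sup>2 = 1"
    using mu by (simp_all add: s_def power_le_one power_less_one_iff abs_less_iff)
  obtain th where th: "mu = cos th" "s = sin th"
    using sincos_total_2pi[OF s(2)] by metis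
  have geo: "(x0 - T0)\<^sup>2 + y0\<^sup>2 = (y0 / s)\<^sup>2" "y0 / s + mu * T0 = L"
    using tangent_time_geometry[OF mu, where x=x0 and y=y0]
    unfolding T0_def L_def s_def by simp_all
  have reach: "sqrt ((x0 - T0)\<^sup>2 + y0\<^sup>2) + mu * T0 = L"
    using geo y0 s(1) by simp
  have "mu * y0 < s * x0"
    using T0 s(1) unfolding T0_def s_def[symmetric] by (simp add: field_simps)
  moreover have "1 < x0\<^sup>2 + y0\<^sup>2"
    using outside by (simp add: real_less_rsqrt)
  ultimately have "mu < x0"
    using mu_less_x0[OF mu y0] by (simp add: s_def)
  have L1: "1 \<le> L"
  proof (rule ccontr)
    assume "\<not> 1 \<le> L"
    then have "y0 / s < 1 - mu * T0"
      using geo(2) by linarith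
    then have "(x0 - T0)\<^sup>2 + y0\<^sup>2 < (1 - mu * T0)\<^sup>2"
      unfolding geo(1) using y0 s(1) by (intro power_strict_mono) auto
    then have "(x0, y0) \<in> Omega mu T0"
      using \<open>\<not> 1 \<le> L\<close> \<open>mu < x0\<close> by (simp add: Omega_def L_def)
    then show False
      using notcap T0 by (auto simp: Omega_capture_def)
  qed
  have barrier: "L \<le> traj_dist mu (\<lambda>_. th) x0 y0 t" if "0 \<le> t" for t
    using traj_dist_const_heading_ge[OF that, of x0 th y0 mu]
    by (simp add: L_def s_def mult.commute flip: th)
  show ?thesis
    by (rule dfstar_eq_if_barrier[where psi="\<lambda>_. th"]) (use mu T0 barrier L1 reach in auto)
qed

lemma dfstar_min_at_initial_time:
  fixes mu x0 y0 :: real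
  defines "R \<equiv> sqrt (x0\<^sup>2 + y0\<^sup>2)"
  assumes mu: "0 < mu" "mu < 1" and y0: "0 \<le> y0" and outside: "1 < R"
    and left: "\<not> 0 < x0 - mu / sqrt (1 - mu\<^sup>2) * y0"
  shows "dfstar mu 0 x0 y0 = R \<and> (\<forall>T\<ge>0. R \<le> dfstar mu T x0 y0)"
proof -
  have R2: "R\<^sup>2 = x0\<^sup>2 + y0\<^sup>2"
    by (simp add: R_def)
  have "(x0 / R)\<^sup>2 + (y0 / R)\<^sup>2 = 1"
    using outside by (simp add: power_divide flip: add_divide_distrib R2)
  then obtain th where th: "x0 / R = cos th" "y0 / R = sin th"
    using sincos_total_2pi by metis
  have "0 < sqrt (1 - mu\<^sup>2)"
    using mu by (simp add: power_less_one_iff abs_less_iff)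
  then have "sqrt (1 - mu\<^sup>2) * x0 \<le> mu * y0"
    using left by (simp add: field_simps)
  then have "x0 / R \<le> mu"
    using x0_le_mu_norm[OF mu] outside by (simp add: R_def divide_le_eq mult.commute)
  then have heading_slow: "cos th \<le> mu"
    by (simp add: th)
  have "x0 * cos th + y0 * sin th = (x0\<^sup>2 + y0\<^sup>2) / R"
    by (simp flip: th add: power2_eq_square add_divide_distrib)
  then have radial: "x0 * cos th + y0 * sin th = R"
    using outside by (simp flip: R2 add: power2_eq_square[of R])
  have barrier: "R \<le> traj_dist mu (\<lambda>_. th) x0 y0 t" if t: "0 \<le> t" for t
  proof -
    have "0 \<le> t * (mu - cos th)"
      using t heading_slow by simp
    then show ?thesis
      using traj_dist_const_heading_ge[OF t, of x0 th y0 mu] radial by linarith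
  qed
  have reach: "sqrt ((x0 - 0)\<^sup>2 + y0\<^sup>2) + mu * 0 \<le> R"
    by (simp add: R_def)
  show ?thesis
    using dfstar_eq_if_barrier[OF _ order.refl _ barrier _ reach] mu outside by simp
qed

theorem lemma7:
  fixes mu x0 y0 Tmin :: real
  assumes mu: "0 < mu" "mu < 1"
    and y0: "y0 \<ge> 0"
    and outside: "sqrt (x0\<^sup>2 + y0\<^sup>2) > 1"
    and notcap: "(x0, y0) \<notin> Omega_capture mu"
    and Tmin_def: "Tmin = (if x0 - mu / sqrt (1 - mu\<^sup>2) * y0 > 0
                           then x0 - mu / sqrt (1 - mu\<^sup>2) * y0 else 0)"
  shows "(\<forall>T\<ge>0. dfstar mu Tmin x0 y0 \<le> dfstar mu T x0 y0)
       \<and> dfstar mu Tmin x0 y0 =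
           (if Tmin > 0 then mu * x0 + sqrt (1 - mu\<^sup>2) * y0 else sqrt (x0\<^sup>2 + y0\<^sup>2))"
proof (cases "x0 - mu / sqrt (1 - mu\<^sup>2) * y0 > 0")
  case True
  then show ?thesis
    using dfstar_min_at_tangent_time[OF mu y0 outside notcap] Tmin_def by simp
next
  case False
  then show ?thesis
    using dfstar_min_at_initial_time[OF mu y0 outside] Tmin_def by simp
qed

end
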